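(* Let $c_1(\alpha)=\psi(\alpha)$ and $c_2(\alpha)=2\int_0^\infty \ln(z)G_\alpha(z)g_\alpha(z)\,dz$. For estimating $H_S(\underline\theta)$ under squared error loss: (1) every estimator $\delta_c$ with $c\in[c_1(\alpha),c_2(\alpha)]$ is admissible within the class $\mathcal K_1$; (2) every estimator $\delta_c$ with $c\in(-\infty,c_1(\alpha))\cup(c_2(\alpha),\infty)$ is inadmissible; (3) if $-\infty<d<c\le c_1(\alpha)$ or $c_2(\alpha)\le c<d<\infty$, then $R_\mu(\delta_c)<R_\mu(\delta_d)$ for all $\mu\ge1$.
   Context: Fix a known $\alpha>0$. $X_1,X_2$ are independent, $X_i$ having density $f(x\mid\theta_i)=\frac{x^{\alpha-1}e^{-x/\theta_i}}{\Gamma(\alpha)\theta_i^{\alpha}}$, $x>0$, with unknown $\underline\theta=(\theta_1,\theta_2)\in\Theta=(0,\infty)^2$. $Z_1=\min\{X_1,X_2\}$, $Z_2=\max\{X_1,X_2\}$. $H_S(\underline\theta)=\ln\theta_1\, I(X_1\ge X_2)+\ln\theta_2\, I(X_1<X_2)$. $\psi$ is the digamma function; $G_\alpha,g_\alpha$ are the distribution function and density of the gamma distribution with shape $\alpha$, scale $1$. For $c\in\mathbb R$, $\delta_c(X_1,X_2)=\ln Z_2-c$, and $\mathcal K_1=\{\delta_c:c\in\mathbb R\}$. The risk of an estimator $\delta$ is $R(\underline\theta,\delta)=\mathbb E_{\underline\theta}(\delta(X_1,X_2)-H_S(\underline\theta))^2$; for $\delta_c$ it depends on $\underline\theta$ only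 through $\mu=\max\{\theta_1,\theta_2\}/\min\{\theta_1,\theta_2\}\ge1$ and is written $R_\mu(\delta_c)$. An estimator $\delta'$ dominates $\delta$ if $R(\underline\theta,\delta')\le R(\underline\theta,\delta)$ for all $\underline\theta$ with strict inequality for some $\underline\theta$; $\delta$ is inadmissible if some estimator dominates it, and $\delta\in\mathcal K_1$ is admissible within $\mathcal K_1$ if no member of $\mathcal K_1$ dominates it. *)

theory Defs
  imports "HOL-Probability.Probability"
begin

definition gamma_dens :: "real \<Rightarrow> real \<Rightarrow> real \<Rightarrow> real" where
  "gamma_dens a th x = (if x > 0 then x powr (a - 1) * exp (- x / th) / (Gamma a * th powr a) else 0)"

definition g_std :: "real \<Rightarrow> real \<Rightarrow> real" where
  "g_std a z = gamma_dens a 1 z"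

definition G_std :: "real \<Rightarrow> real \<Rightarrow> real" where
  "G_std a z = (\<integral>t\<in>{..z}. g_std a t \<partial>lborel)"

definition c1 :: "real \<Rightarrow> real" where
  "c1 a = Digamma a"

definition c2 :: "real \<Rightarrow> real" where
  "c2 a = 2 * (\<integral>z\<in>{0<..}. ln z * G_std a z * g_std a z \<partial>lborel)"

definition H_S :: "real \<times> real \<Rightarrow> real \<times> real \<Rightarrow> real" where
  "H_S th x = (if fst x \<ge> snd x then ln (fst th) else ln (snd th))"

definition delta :: "real \<Rightarrow> real \<times> real \<Rightarrow> real" where
  "delta c x = ln (max (fst x) (snd x)) - c"

definition Theta :: "(real \<times> real) set" where
  "Theta = {0<..} \<times> {0<..}"

text \<open>Risk under squared error loss (as an extended nonnegative real, so it is
  always defined); the joint density of (X1,X2) w.r.t. Lebesgue measure on R^2.\<close>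
definition risk :: "real \<Rightarrow> real \<times> real \<Rightarrow> (real \<times> real \<Rightarrow> real) \<Rightarrow> ennreal" where
  "risk a th d = (\<integral>\<^sup>+ x. ennreal (gamma_dens a (fst th) (fst x) * gamma_dens a (snd th) (snd x)
                         * (d x - H_S th x)\<^sup>2) \<partial>lborel)"

definition dominates :: "real \<Rightarrow> (real \<times> real \<Rightarrow> real) \<Rightarrow> (real \<times> real \<Rightarrow> real) \<Rightarrow> bool" where
  "dominates a d' d \<longleftrightarrow> (\<forall>th\<in>Theta. risk a th d' \<le> risk a th d) \<and> (\<exists>th\<in>Theta. risk a th d' < risk a th d)"

definition inadmissible :: "real \<Rightarrow> (real \<times> real \<Rightarrow> real) \<Rightarrow> bool" where
  "inadmissible a d \<longleftrightarrow> (\<exists>d' \<in> borel_measurable borel. dominates a d' d)"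

definition admissible_within_K1 :: "real \<Rightarrow> real \<Rightarrow> bool" where
  "admissible_within_K1 a c \<longleftrightarrow> \<not> (\<exists>c'. dominates a (delta c') (delta c))"

end

theory Submission
  imports Defs
begin

text \<open>Write \<open>X\<^sub>i = \<theta>\<^sub>i Y\<^sub>i\<close> with \<open>Y\<^sub>1, Y\<^sub>2\<close> i.i.d. standard gamma. If the maximum of \<open>X\<^sub>1, X\<^sub>2\<close>
  is attained at \<open>X\<^sub>i\<close>, then \<open>\<delta>\<^sub>c - H\<^sub>S = ln Y\<^sub>i - c\<close>; so with \<open>W\<^sub>\<theta> = ln Y\<^sub>i\<close> the risk of \<open>\<delta>\<^sub>c\<close> is
  \<open>Var W\<^sub>\<theta> + (m(\<theta>) - c)\<^sup>2\<close>, \<open>m(\<theta>) = E W\<^sub>\<theta>\<close>, and within \<open>\<K>\<^sub>1\<close> only the distance from \<open>c\<close> to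
  \<open>m(\<theta>)\<close> matters. Since \<open>W\<^sub>\<theta>\<close> dominates the log of the coordinate with the larger scale and
  is dominated by \<open>ln max(Y\<^sub>1, Y\<^sub>2)\<close>, \<open>\<psi>(\<alpha>) \<le> m(\<theta>) \<le> m(1, 1) = c\<^sub>2(\<alpha>)\<close>; moreover
  \<open>m(t, 1) \<rightarrow> \<psi>(\<alpha>)\<close> as \<open>t \<rightarrow> \<infinity>\<close>. Outside \<open>[c\<^sub>1, c\<^sub>2]\<close> moving \<open>c\<close> towards the interval
  therefore lowers the risk at every \<open>\<theta>\<close>, while inside it no shift of \<open>c\<close> helps at both
  \<open>\<theta> = (1, 1)\<close> and \<open>\<theta> = (t, 1)\<close> with \<open>t\<close> large.\<close>

definition gamma_kernel :: "real \<Rightarrow> real \<Rightarrow> real" where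
  "gamma_kernel s t = (if t > 0 then t powr (s - 1) * exp (- t) else 0)"

lemma gamma_kernel_measurable [measurable]: "gamma_kernel s \<in> borel_measurable borel"
  unfolding gamma_kernel_def by measurable

lemma gamma_kernel_nonneg: "gamma_kernel s t \<ge> 0"
  by (simp add: gamma_kernel_def)

lemma has_bochner_integral_gamma_kernel:
  assumes "s > 0"
  shows "has_bochner_integral lborel (gamma_kernel s) (Gamma s)"
proof (rule has_bochner_integral_nn_integral)
  show "AE t in lborel. 0 \<le> gamma_kernel s t" by (simp add: gamma_kernel_nonneg)
  show "0 \<le> Gamma s" using assms by (simp add: less_imp_le)
  have "(\<integral>\<^sup>+t. ennreal (gamma_kernel s t) \<partial>lborel) =
        (\<integral>\<^sup>+t. ennreal (indicator {0..} t * t powr (s - 1) / exp t) \<partial>lborel)"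
    by (intro nn_integral_cong) (auto simp: gamma_kernel_def exp_minus field_simps indicator_def)
  also have "\<dots> = Gamma s"
    using Gamma_conv_nn_integral_real[OF assms] by simp
  finally show "(\<integral>\<^sup>+t. ennreal (gamma_kernel s t) \<partial>lborel) = ennreal (Gamma s)" .
qed simp

lemma integrable_gamma_kernel: "s > 0 \<Longrightarrow> integrable lborel (gamma_kernel s)"
  using has_bochner_integral_gamma_kernel by (rule integrable.intros)

lemma integral_gamma_kernel: "s > 0 \<Longrightarrow> integral\<^sup>L lborel (gamma_kernel s) = Gamma s"
  using has_bochner_integral_gamma_kernel by (rule has_bochner_integral_integral_eq)

lemma g_std_measurable [measurable]: "g_std a \<in> borel_measurable borel"
  unfolding g_std_def gamma_dens_def by measurable

lemma g_std_mult_powr: "g_std a t * t powr e = gamma_kernel (a + e) t / Gamma a"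
  by (simp add: g_std_def gamma_dens_def gamma_kernel_def powr_add[symmetric] algebra_simps)

lemma g_std_eq_gamma_kernel: "g_std a t = gamma_kernel a t / Gamma a"
  using g_std_mult_powr[of a t 0] by (cases "t > 0") (simp_all add: g_std_def gamma_dens_def)

lemma g_std_nonneg: "a > 0 \<Longrightarrow> g_std a t \<ge> 0"
  by (simp add: g_std_eq_gamma_kernel gamma_kernel_nonneg)

lemma g_std_nonzero_imp_pos: "g_std a t \<noteq> 0 \<Longrightarrow> t > 0"
  by (auto simp: g_std_def gamma_dens_def split: if_splits)

lemma integrable_g_std_mult_powr:
  "a > 0 \<Longrightarrow> a + e > 0 \<Longrightarrow> integrable lborel (\<lambda>t. g_std a t * t powr e)"
  by (simp add: g_std_mult_powr integrable_gamma_kernel)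

lemma integral_g_std_mult_powr:
  "a > 0 \<Longrightarrow> a + e > 0 \<Longrightarrow> (\<integral>t. g_std a t * t powr e \<partial>lborel) = Gamma (a + e) / Gamma a"
  by (simp add: g_std_mult_powr integral_gamma_kernel)

lemma integrable_g_std_mult_powr_add:
  "a > 0 \<Longrightarrow> a + e1 > 0 \<Longrightarrow> a + e2 > 0 \<Longrightarrow>
    integrable lborel (\<lambda>t. g_std a t * (t powr e1 + t powr e2))"
  by (simp add: distrib_left integrable_g_std_mult_powr)

lemma integrable_g_std: "a > 0 \<Longrightarrow> integrable lborel (g_std a)"
  by (simp add: g_std_eq_gamma_kernel[abs_def] integrable_gamma_kernel less_imp_neq[symmetric])

lemma integral_g_std: "a > 0 \<Longrightarrow> integral\<^sup>L lborel (g_std a) = 1"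
  by (simp add: g_std_eq_gamma_kernel[abs_def] integral_gamma_kernel less_imp_neq[symmetric])

lemma integrable_mult_dominated:
  fixes p f h :: "'a \<Rightarrow> real"
  assumes "integrable M (\<lambda>x. p x * h x)"
    and "p \<in> borel_measurable M" "f \<in> borel_measurable M"
    and "\<And>x. p x \<noteq> 0 \<Longrightarrow> \<bar>f x\<bar> \<le> h x"
  shows "integrable M (\<lambda>x. p x * f x)"
proof (rule Bochner_Integration.integrable_bound[OF assms(1)])
  show "AE x in M. norm (p x * f x) \<le> norm (p x * h x)"
  proof (rule AE_I2)
    fix x
    show "norm (p x * f x) \<le> norm (p x * h x)"
    proof (cases "p x = 0")
      case False
      then have "\<bar>f x\<bar> \<le> \<bar>h x\<bar>" using assms(4) by fastforce
      then show ?thesis by (simp add: abs_mult mult_left_mono)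
    qed simp
  qed
qed (use assms in simp)

lemma abs_ln_le_powr:
  fixes t b :: real
  assumes "t > 0" "b > 0"
  shows "\<bar>ln t\<bar> \<le> (t powr b + t powr (- b)) / b"
proof -
  have "b * ln t \<le> t powr b" and "- b * ln t \<le> t powr (- b)"
    using ln_le_minus_one[of "t powr b"] ln_le_minus_one[of "t powr (- b)"] assms by simp_all
  moreover have "t powr b \<ge> 0" "t powr (- b) \<ge> 0" by simp_all
  ultimately have "\<bar>b * ln t\<bar> \<le> t powr b + t powr (- b)"
    unfolding abs_le_iff by linarith
  then show ?thesis
    using assms by (simp add: field_simps abs_mult)
qed

lemma integrable_g_std_mult_ln_squared:
  assumes "a > 0"
  shows "integrable lborel (\<lambda>t. g_std a t * (ln t)\<^sup>2)"
proof (rule integrable_mult_dominated)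
  define b where "b = a / 4"
  have b: "b > 0" using assms by (simp add: b_def)
  let ?h = "\<lambda>t. (t powr (2 * b) + t powr (- 2 * b)) * (2 / b\<^sup>2)"
  have "integrable lborel (\<lambda>t. g_std a t * (t powr (2 * b) + t powr (- 2 * b)) * (2 / b\<^sup>2))"
    using integrable_g_std_mult_powr_add[of a "2 * b" "- 2 * b"] assms by (simp add: b_def)
  then show "integrable lborel (\<lambda>t. g_std a t * ?h t)"
    by (simp only: mult.assoc)
  show "\<bar>(ln t)\<^sup>2\<bar> \<le> ?h t" if "g_std a t \<noteq> 0" for t
  proof -
    have t: "t > 0" using g_std_nonzero_imp_pos[OF that] .
    have "\<bar>ln t\<bar>\<^sup>2 \<le> ((t powr b + t powr (- b)) / b)\<^sup>2"
      using abs_ln_le_powr[OF t b] by (intro power_mono) auto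
    also have "\<dots> = (t powr b + t powr (- b))\<^sup>2 / b\<^sup>2"
      by (simp add: power_divide)
    also have "\<dots> \<le> 2 * ((t powr b)\<^sup>2 + (t powr (- b))\<^sup>2) / b\<^sup>2"
      using sum_squares_bound[of "t powr b" "t powr (- b)"]
      by (intro divide_right_mono) (simp_all add: power2_sum)
    also have "\<dots> = ?h t"
      using t by (simp add: powr_power mult.commute)
    finally show ?thesis by simp
  qed
qed (simp_all add: assms)

lemma integrable_g_std_mult_abs_ln_weight:
  assumes "a > 0"
  shows "integrable lborel (\<lambda>t. g_std a t * (\<bar>ln t\<bar> * (1 + t)))"
proof (rule integrable_mult_dominated)
  define b where "b = a / 2"
  have b: "b > 0" using assms by (simp add: b_def)
  let ?h = "\<lambda>t. (t powr b + t powr (- b)) * (1 / b) + (t powr (1 + b) + t powr (1 - b)) * (1 / b)"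
  have "integrable lborel (\<lambda>t. g_std a t * (t powr b + t powr (- b)) * (1 / b)
                              + g_std a t * (t powr (1 + b) + t powr (1 - b)) * (1 / b))"
    using integrable_g_std_mult_powr_add[of a b "- b"] integrable_g_std_mult_powr_add[of a "1 + b" "1 - b"]
      assms by (simp add: b_def)
  then show "integrable lborel (\<lambda>t. g_std a t * ?h t)"
    by (simp add: algebra_simps)
  show "\<bar>\<bar>ln t\<bar> * (1 + t)\<bar> \<le> ?h t" if "g_std a t \<noteq> 0" for t
  proof -
    have t: "t > 0" using g_std_nonzero_imp_pos[OF that] .
    have "\<bar>ln t\<bar> * (1 + t) \<le> (t powr b + t powr (- b)) / b * (1 + t)"
      using abs_ln_le_powr[OF t b] t by (intro mult_right_mono) auto
    also have "\<dots> = ?h t"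
    proof -
      have "t powr (1 + b) = t * t powr b" "t powr (1 - b) = t * t powr (- b)"
        using t by (simp_all add: powr_add powr_diff powr_minus_divide)
      then show ?thesis using b by (simp add: field_simps)
    qed
    finally show ?thesis using t by simp
  qed
qed (simp_all add: assms)

lemma integrable_g_std_mult_ln:
  assumes "a > 0"
  shows "integrable lborel (\<lambda>t. g_std a t * ln t)"
proof (rule integrable_mult_dominated[OF integrable_g_std_mult_abs_ln_weight[OF assms]])
  show "\<bar>ln t\<bar> \<le> \<bar>ln t\<bar> * (1 + t)" if "g_std a t \<noteq> 0" for t
    using g_std_nonzero_imp_pos[OF that] by (simp add: mult_le_cancel_left1)
qed simp_all

lemma abs_exp_minus_one_le:
  fixes x :: real
  shows "\<bar>exp x - 1\<bar> \<le> \<bar>x\<bar> * max 1 (exp x)"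
proof (cases "x \<ge> 0")
  case True
  have "exp x * (1 - x) \<le> exp x * exp (- x)"
    using exp_ge_add_one_self[of "- x"] by (intro mult_left_mono) auto
  then have "exp x - 1 \<le> x * exp x"
    by (simp add: exp_minus_inverse algebra_simps)
  then show ?thesis using True by (simp add: max_def)
next
  case False
  then have "\<bar>exp x - 1\<bar> = 1 - exp x" "\<bar>x\<bar> * max 1 (exp x) = - x" by simp_all
  moreover have "1 + x \<le> exp x" by (rule exp_ge_add_one_self)
  ultimately show ?thesis by linarith
qed

lemma abs_powr_minus_one_le:
  fixes t h :: real
  assumes "t > 0" "0 < h" "h \<le> 1"
  shows "\<bar>t powr h - 1\<bar> \<le> h * (\<bar>ln t\<bar> * (1 + t))"
proof -
  have "t powr h \<le> 1 + t"
  proof (cases "t \<le> 1")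
    case True
    then show ?thesis using powr_le1[of h t] assms by simp
  next
    case False
    then have "t powr h \<le> t powr 1" using assms by (intro powr_mono) auto
    then show ?thesis using assms by simp
  qed
  then have max_le: "max 1 (t powr h) \<le> 1 + t" using assms by simp
  have "\<bar>t powr h - 1\<bar> \<le> \<bar>h * ln t\<bar> * max 1 (t powr h)"
    using abs_exp_minus_one_le[of "h * ln t"] assms by (simp add: powr_def)
  also have "\<dots> \<le> \<bar>h * ln t\<bar> * (1 + t)"
    using max_le by (rule mult_left_mono) simp
  also have "\<dots> = h * (\<bar>ln t\<bar> * (1 + t))"
    using assms by (simp add: abs_mult)
  finally show ?thesis .
qed

lemma powr_minus_one_div_tendsto:
  fixes t :: real
  assumes "t > 0"
  shows "((\<lambda>h. (t powr h - 1) / h) \<longlongrightarrow> ln t) (at 0)"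
proof -
  have "((\<lambda>h. exp (h * ln t)) has_real_derivative ln t) (at 0)"
    by (auto intro!: derivative_eq_intros)
  then have "((\<lambda>h. (exp ((0 + h) * ln t) - exp (0 * ln t)) / h) \<longlongrightarrow> ln t) (at 0)"
    unfolding DERIV_def .
  then show ?thesis
    using assms by (simp add: powr_def)
qed

lemma integral_g_std_mult_powr_quotient:
  assumes a: "a > 0" and h: "h > 0"
  shows "(\<integral>t. g_std a t * ((t powr h - 1) / h) \<partial>lborel) = (Gamma (a + h) - Gamma a) / h / Gamma a"
proof -
  have "(\<lambda>t. g_std a t * ((t powr h - 1) / h)) = (\<lambda>t. (g_std a t * t powr h - g_std a t) / h)"
    by (simp add: fun_eq_iff algebra_simps diff_divide_distrib)
  then have "(\<integral>t. g_std a t * ((t powr h - 1) / h) \<partial>lborel) = (Gamma (a + h) / Gamma a - 1) / h"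
    using integrable_g_std_mult_powr[OF a, of h] integral_g_std_mult_powr[OF a, of h]
      integrable_g_std[OF a] integral_g_std[OF a] a h by simp
  then show ?thesis
    using Gamma_real_pos[OF a] h by (simp add: field_simps)
qed

lemma tendsto_integral_g_std_mult_powr_quotient:
  assumes a: "a > 0"
    and h: "\<And>n. 0 < h n" "\<And>n. h n \<le> 1" and lim: "filterlim h (at 0) sequentially"
  shows "(\<lambda>n. \<integral>t. g_std a t * ((t powr h n - 1) / h n) \<partial>lborel) \<longlonglongrightarrow> (\<integral>t. g_std a t * ln t \<partial>lborel)"
proof (rule integral_dominated_convergence[where w = "\<lambda>t. g_std a t * (\<bar>ln t\<bar> * (1 + t))"])
  show "integrable lborel (\<lambda>t. g_std a t * (\<bar>ln t\<bar> * (1 + t)))"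
    using a by (rule integrable_g_std_mult_abs_ln_weight)
  show "AE t in lborel. (\<lambda>n. g_std a t * ((t powr h n - 1) / h n)) \<longlonglongrightarrow> g_std a t * ln t"
  proof (rule AE_I2)
    fix t :: real
    show "(\<lambda>n. g_std a t * ((t powr h n - 1) / h n)) \<longlonglongrightarrow> g_std a t * ln t"
    proof (cases "t > 0")
      case True
      show ?thesis
        by (intro tendsto_mult tendsto_const filterlim_compose[OF powr_minus_one_div_tendsto[OF True] lim])
    qed (simp add: g_std_def gamma_dens_def)
  qed
  show "AE t in lborel. norm (g_std a t * ((t powr h n - 1) / h n)) \<le> g_std a t * (\<bar>ln t\<bar> * (1 + t))"
    for n
  proof (rule AE_I2)
    fix t :: real
    show "norm (g_std a t * ((t powr h n - 1) / h n)) \<le> g_std a t * (\<bar>ln t\<bar> * (1 + t))"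
    proof (cases "t > 0")
      case True
      have "\<bar>(t powr h n - 1) / h n\<bar> \<le> \<bar>ln t\<bar> * (1 + t)"
        using abs_powr_minus_one_le[OF True h] h(1)[of n] by (simp add: abs_divide divide_le_eq mult.commute)
      then have "g_std a t * \<bar>(t powr h n - 1) / h n\<bar> \<le> g_std a t * (\<bar>ln t\<bar> * (1 + t))"
        using g_std_nonneg[OF a, of t] by (rule mult_left_mono)
      then show ?thesis
        using g_std_nonneg[OF a, of t] by (simp only: real_norm_def abs_mult abs_of_nonneg)
    qed (simp add: g_std_def gamma_dens_def)
  qed
qed simp_all

lemma inverse_Suc_at_0: "filterlim (\<lambda>n. inverse (real (Suc n))) (at 0) sequentially"
  unfolding filterlim_at using LIMSEQ_inverse_real_of_nat by auto

text \<open>Differentiating Euler's integral for \<open>\<Gamma>\<close> under the integral sign at \<open>a\<close>.\<close>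
lemma integral_g_std_mult_ln:
  assumes a: "a > 0"
  shows "(\<integral>t. g_std a t * ln t \<partial>lborel) = Digamma a"
proof -
  define h :: "nat \<Rightarrow> real" where "h n = inverse (real (Suc n))" for n
  have h: "0 < h n" "h n \<le> 1" for n
    by (auto simp: h_def field_simps)
  have "a \<notin> \<int>\<^sub>\<le>\<^sub>0"
    using a by (auto elim!: nonpos_Ints_cases)
  then have "(Gamma has_real_derivative Gamma a * Digamma a) (at a)"
    by (rule has_field_derivative_Gamma)
  then have "((\<lambda>x. (Gamma (a + x) - Gamma a) / x) \<longlongrightarrow> Gamma a * Digamma a) (at 0)"
    unfolding DERIV_def .
  then have "(\<lambda>n. (Gamma (a + h n) - Gamma a) / h n / Gamma a) \<longlonglongrightarrow> Gamma a * Digamma a / Gamma a"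
    unfolding h_def by (intro tendsto_divide tendsto_const filterlim_compose[OF _ inverse_Suc_at_0])
      (use Gamma_real_pos[OF a] in simp_all)
  then have "(\<lambda>n. (Gamma (a + h n) - Gamma a) / h n / Gamma a) \<longlonglongrightarrow> Digamma a"
    using Gamma_real_pos[OF a] by simp
  then have "(\<lambda>n. \<integral>t. g_std a t * ((t powr h n - 1) / h n) \<partial>lborel) \<longlonglongrightarrow> Digamma a"
    by (simp only: integral_g_std_mult_powr_quotient[OF a h(1)])
  moreover have "(\<lambda>n. \<integral>t. g_std a t * ((t powr h n - 1) / h n) \<partial>lborel) \<longlonglongrightarrow> (\<integral>t. g_std a t * ln t \<partial>lborel)"
    using a h inverse_Suc_at_0 unfolding h_def[abs_def] by (rule tendsto_integral_g_std_mult_powr_quotient)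
  ultimately show ?thesis
    by (rule LIMSEQ_unique[rotated])
qed

lemma (in pair_sigma_finite)
  fixes f :: "'a \<Rightarrow> real" and g :: "'b \<Rightarrow> real"
  assumes f: "integrable M1 f" and g: "integrable M2 g"
  shows integrable_mult_fst_snd: "integrable (M1 \<Otimes>\<^sub>M M2) (\<lambda>z. f (fst z) * g (snd z))"
    and integral_mult_fst_snd:
      "(\<integral>z. f (fst z) * g (snd z) \<partial>(M1 \<Otimes>\<^sub>M M2)) = integral\<^sup>L M1 f * integral\<^sup>L M2 g"
proof -
  have [measurable]: "f \<in> borel_measurable M1" "g \<in> borel_measurable M2"
    using f g by auto
  have "integrable (M1 \<Otimes>\<^sub>M M2) (\<lambda>(x, y). f x * g y)"
  proof (rule Fubini_integrable)
    show "integrable M1 (\<lambda>x. \<integral>y. norm (case (x, y) of (x, y) \<Rightarrow> f x * g y) \<partial>M2)"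
      using f by (simp add: abs_mult)
  qed (use g in simp_all)
  then show int: "integrable (M1 \<Otimes>\<^sub>M M2) (\<lambda>z. f (fst z) * g (snd z))"
    by (simp add: case_prod_beta')
  show "(\<integral>z. f (fst z) * g (snd z) \<partial>(M1 \<Otimes>\<^sub>M M2)) = integral\<^sup>L M1 f * integral\<^sup>L M2 g"
    using integral_fst'[OF int] by simp
qed

lemma gamma_dens_scale:
  assumes th: "th > 0"
  shows "th * gamma_dens a th (th * y) = g_std a y"
proof (cases "y > 0")
  case True
  have "(th * y) powr (a - 1) = th powr (a - 1) * y powr (a - 1)" "th powr a = th powr (a - 1) * th"
    using True th by (simp_all add: powr_mult powr_diff)
  moreover have "th powr (a - 1) > 0" using th by simp
  ultimately show ?thesis
    using True th by (simp add: gamma_dens_def g_std_def field_simps)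
qed (use th in \<open>simp add: gamma_dens_def g_std_def zero_less_mult_iff\<close>)

lemma gamma_dens_measurable [measurable]: "gamma_dens a th \<in> borel_measurable borel"
  unfolding gamma_dens_def by measurable

lemma nn_integral_gamma_dens_scale:
  fixes \<phi> :: "real \<Rightarrow> real"
  assumes th: "th > 0" and [measurable]: "\<phi> \<in> borel_measurable borel"
  shows "(\<integral>\<^sup>+x. ennreal (gamma_dens a th x * \<phi> x) \<partial>lborel) = (\<integral>\<^sup>+y. ennreal (g_std a y * \<phi> (th * y)) \<partial>lborel)"
proof -
  have "(\<integral>\<^sup>+x. ennreal (gamma_dens a th x * \<phi> x) \<partial>lborel)
      = \<bar>th\<bar> * (\<integral>\<^sup>+y. ennreal (gamma_dens a th (0 + th * y) * \<phi> (0 + th * y)) \<partial>lborel)"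
    by (rule nn_integral_real_affine) (use th in auto)
  also have "\<dots> = (\<integral>\<^sup>+y. ennreal (th * (gamma_dens a th (th * y) * \<phi> (th * y))) \<partial>lborel)"
    using th by (simp add: nn_integral_cmult[symmetric] ennreal_mult')
  also have "\<dots> = (\<integral>\<^sup>+y. ennreal (g_std a y * \<phi> (th * y)) \<partial>lborel)"
    using gamma_dens_scale[OF th] by (simp add: mult.assoc[symmetric])
  finally show ?thesis .
qed

abbreviation lborel2 :: "(real \<times> real) measure" where
  "lborel2 \<equiv> lborel \<Otimes>\<^sub>M lborel"

lemma nn_integral_gamma_dens_pair_scale:
  fixes F :: "real \<times> real \<Rightarrow> real"
  assumes t1: "t1 > 0" and t2: "t2 > 0" and [measurable]: "F \<in> borel_measurable lborel2"
  shows "(\<integral>\<^sup>+x. ennreal (gamma_dens a t1 (fst x) * gamma_dens a t2 (snd x) * F x) \<partial>lborel)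
       = (\<integral>\<^sup>+y. ennreal (g_std a (fst y) * g_std a (snd y) * F (t1 * fst y, t2 * snd y)) \<partial>lborel2)"
proof -
  have "(\<integral>\<^sup>+x. ennreal (gamma_dens a t1 (fst x) * gamma_dens a t2 (snd x) * F x) \<partial>lborel)
      = (\<integral>\<^sup>+x1. \<integral>\<^sup>+x2. ennreal (gamma_dens a t2 x2 * (gamma_dens a t1 x1 * F (x1, x2))) \<partial>lborel \<partial>lborel)"
    by (simp only: lborel_prod[symmetric], subst lborel.nn_integral_fst[symmetric]) (auto simp: mult_ac)
  also have "\<dots> = (\<integral>\<^sup>+x1. \<integral>\<^sup>+y2. ennreal (g_std a y2 * (gamma_dens a t1 x1 * F (x1, t2 * y2))) \<partial>lborel \<partial>lborel)"
    by (intro nn_integral_cong nn_integral_gamma_dens_scale t2) measurable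
  also have "\<dots> = (\<integral>\<^sup>+y2. \<integral>\<^sup>+x1. ennreal (gamma_dens a t1 x1 * (g_std a y2 * F (x1, t2 * y2))) \<partial>lborel \<partial>lborel)"
  proof -
    have "(\<lambda>(x1, y2). ennreal (g_std a y2 * (gamma_dens a t1 x1 * F (x1, t2 * y2)))) \<in> borel_measurable lborel2"
      by measurable
    from lborel_pair.Fubini[OF this] show ?thesis by (simp add: mult_ac)
  qed
  also have "\<dots> = (\<integral>\<^sup>+y2. \<integral>\<^sup>+y1. ennreal (g_std a y1 * (g_std a y2 * F (t1 * y1, t2 * y2))) \<partial>lborel \<partial>lborel)"
    by (intro nn_integral_cong nn_integral_gamma_dens_scale t1) measurable
  also have "\<dots> = (\<integral>\<^sup>+y. ennreal (g_std a (fst y) * g_std a (snd y) * F (t1 * fst y, t2 * snd y)) \<partial>lborel2)"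
    by (subst lborel_pair.nn_integral_snd[symmetric]) (auto simp: mult_ac)
  finally show ?thesis .
qed

definition gamma_pair :: "real \<Rightarrow> real \<times> real \<Rightarrow> real" where
  "gamma_pair a y = g_std a (fst y) * g_std a (snd y)"

text \<open>For \<open>X = (\<theta>\<^sub>1 Y\<^sub>1, \<theta>\<^sub>2 Y\<^sub>2)\<close>: \<open>ln Y\<^sub>i\<close> for the index \<open>i\<close> at which \<open>max X\<close> is attained,
  ties going to \<open>X\<^sub>1\<close> as in \<open>H\<^sub>S\<close>.\<close>
definition log_winner :: "real \<times> real \<Rightarrow> real \<times> real \<Rightarrow> real" where
  "log_winner th y = (if fst th * fst y \<ge> snd th * snd y then ln (fst y) else ln (snd y))"

definition mean_log_winner :: "real \<Rightarrow> real \<times> real \<Rightarrow> real" where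
  "mean_log_winner a th = (\<integral>y. gamma_pair a y * log_winner th y \<partial>lborel2)"

definition delta_risk :: "real \<Rightarrow> real \<times> real \<Rightarrow> real \<Rightarrow> real" where
  "delta_risk a th c = (\<integral>y. gamma_pair a y * (log_winner th y - c)\<^sup>2 \<partial>lborel2)"

lemma gamma_pair_measurable [measurable]: "gamma_pair a \<in> borel_measurable lborel2"
  unfolding gamma_pair_def by measurable

lemma log_winner_measurable [measurable]: "log_winner th \<in> borel_measurable lborel2"
  unfolding log_winner_def by measurable

lemma gamma_pair_nonneg: "a > 0 \<Longrightarrow> gamma_pair a y \<ge> 0"
  by (simp add: gamma_pair_def g_std_nonneg)

lemma gamma_pair_nonzero_imp_pos: "gamma_pair a y \<noteq> 0 \<Longrightarrow> fst y > 0 \<and> snd y > 0"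
  using g_std_nonzero_imp_pos by (auto simp: gamma_pair_def)

lemma
  assumes "a > 0" and f: "integrable lborel (\<lambda>t. g_std a t * f t)"
  shows integrable_gamma_pair_mult_fst: "integrable lborel2 (\<lambda>y. gamma_pair a y * f (fst y))"
    and integral_gamma_pair_mult_fst:
      "(\<integral>y. gamma_pair a y * f (fst y) \<partial>lborel2) = (\<integral>t. g_std a t * f t \<partial>lborel)"
  using lborel_pair.integrable_mult_fst_snd[OF f integrable_g_std[OF assms(1)]]
    lborel_pair.integral_mult_fst_snd[OF f integrable_g_std[OF assms(1)]] integral_g_std[OF assms(1)]
  by (simp_all add: gamma_pair_def mult_ac)

lemma
  assumes "a > 0" and f: "integrable lborel (\<lambda>t. g_std a t * f t)"
  shows integrable_gamma_pair_mult_snd: "integrable lborel2 (\<lambda>y. gamma_pair a y * f (snd y))"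
    and integral_gamma_pair_mult_snd:
      "(\<integral>y. gamma_pair a y * f (snd y) \<partial>lborel2) = (\<integral>t. g_std a t * f t \<partial>lborel)"
  using lborel_pair.integrable_mult_fst_snd[OF integrable_g_std[OF assms(1)] f]
    lborel_pair.integral_mult_fst_snd[OF integrable_g_std[OF assms(1)] f] integral_g_std[OF assms(1)]
  by (simp_all add: gamma_pair_def mult_ac)

lemma
  assumes "a > 0"
  shows integrable_gamma_pair: "integrable lborel2 (gamma_pair a)"
    and integral_gamma_pair: "integral\<^sup>L lborel2 (gamma_pair a) = 1"
  using integrable_gamma_pair_mult_fst[OF assms, of "\<lambda>_. 1"]
    integral_gamma_pair_mult_fst[OF assms, of "\<lambda>_. 1"]
  by (simp_all add: integrable_g_std[OF assms] integral_g_std[OF assms])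

lemma integrable_g_std_mult_abs_ln:
  "a > 0 \<Longrightarrow> integrable lborel (\<lambda>t. g_std a t * \<bar>ln t\<bar>)"
  using integrable_abs[OF integrable_g_std_mult_ln] by (simp add: abs_mult g_std_nonneg)

lemma integrable_gamma_pair_mult_abs_ln:
  assumes "a > 0"
  shows "integrable lborel2 (\<lambda>y. gamma_pair a y * (\<bar>ln (fst y)\<bar> + \<bar>ln (snd y)\<bar>))"
  using integrable_gamma_pair_mult_fst[OF assms integrable_g_std_mult_abs_ln[OF assms]]
    integrable_gamma_pair_mult_snd[OF assms integrable_g_std_mult_abs_ln[OF assms]]
  by (simp add: distrib_left)

lemma integrable_gamma_pair_mult_ln_squared:
  assumes "a > 0"
  shows "integrable lborel2 (\<lambda>y. gamma_pair a y * ((ln (fst y))\<^sup>2 + (ln (snd y))\<^sup>2))"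
  using integrable_gamma_pair_mult_fst[OF assms integrable_g_std_mult_ln_squared[OF assms]]
    integrable_gamma_pair_mult_snd[OF assms integrable_g_std_mult_ln_squared[OF assms]]
  by (simp add: distrib_left)

lemma integrable_gamma_pair_mult_log_winner:
  "a > 0 \<Longrightarrow> integrable lborel2 (\<lambda>y. gamma_pair a y * log_winner th y)"
  by (rule integrable_mult_dominated[OF integrable_gamma_pair_mult_abs_ln]) (auto simp: log_winner_def)

lemma integrable_gamma_pair_mult_log_winner_squared:
  "a > 0 \<Longrightarrow> integrable lborel2 (\<lambda>y. gamma_pair a y * (log_winner th y)\<^sup>2)"
  by (rule integrable_mult_dominated[OF integrable_gamma_pair_mult_ln_squared]) (auto simp: log_winner_def)

lemma delta_risk_expand:
  assumes "a > 0"
  shows "delta_risk a th c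
    = (\<integral>y. gamma_pair a y * (log_winner th y)\<^sup>2 \<partial>lborel2) - 2 * c * mean_log_winner a th + c\<^sup>2"
proof -
  have "(\<lambda>y. gamma_pair a y * (log_winner th y - c)\<^sup>2)
      = (\<lambda>y. gamma_pair a y * (log_winner th y)\<^sup>2 - 2 * c * (gamma_pair a y * log_winner th y)
             + c\<^sup>2 * gamma_pair a y)"
    by (simp add: fun_eq_iff power2_diff algebra_simps)
  then show ?thesis
    using integrable_gamma_pair_mult_log_winner_squared[OF assms] integrable_gamma_pair_mult_log_winner[OF assms]
      integrable_gamma_pair[OF assms] integral_gamma_pair[OF assms]
    by (simp add: delta_risk_def mean_log_winner_def)
qed

lemma delta_risk_bias_variance:
  "a > 0 \<Longrightarrow> delta_risk a th c
    = delta_risk a th (mean_log_winner a th) + (mean_log_winner a th - c)\<^sup>2"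
  by (simp add: delta_risk_expand power2_diff power2_eq_square algebra_simps)

lemma delta_risk_nonneg: "a > 0 \<Longrightarrow> delta_risk a th c \<ge> 0"
  unfolding delta_risk_def by (rule integral_nonneg_AE) (simp add: gamma_pair_nonneg)

lemma risk_delta:
  assumes "a > 0" and th: "th \<in> Theta"
  shows "risk a th (delta c) = ennreal (delta_risk a th c)"
proof -
  obtain t1 t2 where th_eq: "th = (t1, t2)" and t: "t1 > 0" "t2 > 0"
    using th by (auto simp: Theta_def)
  have loss: "(delta c (t1 * fst y, t2 * snd y) - H_S th (t1 * fst y, t2 * snd y))\<^sup>2 = (log_winner th y - c)\<^sup>2"
    if "fst y > 0" "snd y > 0" for y
    using that t by (auto simp: th_eq delta_def H_S_def log_winner_def max_def ln_mult)
  have "risk a th (delta c)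
      = (\<integral>\<^sup>+y. ennreal (gamma_pair a y * (delta c (t1 * fst y, t2 * snd y) - H_S th (t1 * fst y, t2 * snd y))\<^sup>2) \<partial>lborel2)"
    unfolding risk_def th_eq gamma_pair_def
    by (subst nn_integral_gamma_dens_pair_scale) (use t in \<open>auto simp: delta_def H_S_def\<close>)
  also have "\<dots> = (\<integral>\<^sup>+y. ennreal (gamma_pair a y * (log_winner th y - c)\<^sup>2) \<partial>lborel2)"
    by (intro nn_integral_cong) (metis gamma_pair_nonzero_imp_pos loss mult_eq_0_iff)
  also have "\<dots> = ennreal (delta_risk a th c)"
    unfolding delta_risk_def
  proof (rule nn_integral_eq_integral)
    show "integrable lborel2 (\<lambda>y. gamma_pair a y * (log_winner th y - c)\<^sup>2)"
      using integrable_gamma_pair_mult_log_winner_squared[OF assms(1)] integrable_gamma_pair_mult_log_winner[OF assms(1)]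
        integrable_gamma_pair[OF assms(1)]
      by (simp add: power2_diff algebra_simps)
  qed (simp add: gamma_pair_nonneg assms)
  finally show ?thesis .
qed

lemma risk_delta_less_iff:
  assumes "a > 0" "th \<in> Theta"
  shows "risk a th (delta c) < risk a th (delta d)
    \<longleftrightarrow> \<bar>mean_log_winner a th - c\<bar> < \<bar>mean_log_winner a th - d\<bar>"
proof -
  have "risk a th (delta c) < risk a th (delta d) \<longleftrightarrow> delta_risk a th c < delta_risk a th d"
    using delta_risk_nonneg[OF assms(1)] by (simp add: risk_delta[OF assms] ennreal_less_iff)
  also have "\<dots> \<longleftrightarrow> (mean_log_winner a th - c)\<^sup>2 < (mean_log_winner a th - d)\<^sup>2"
    by (subst (1 2) delta_risk_bias_variance[OF assms(1)]) simp
  finally show ?thesis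
    by (metis abs_le_square_iff not_le)
qed

lemma risk_delta_le_iff:
  assumes "a > 0" "th \<in> Theta"
  shows "risk a th (delta c) \<le> risk a th (delta d)
    \<longleftrightarrow> \<bar>mean_log_winner a th - c\<bar> \<le> \<bar>mean_log_winner a th - d\<bar>"
  using risk_delta_less_iff[OF assms, of d c] by (simp add: not_less[symmetric])

lemma integral_gamma_pair_mult_mono:
  assumes "a > 0"
    and "integrable lborel2 (\<lambda>y. gamma_pair a y * f y)" "integrable lborel2 (\<lambda>y. gamma_pair a y * g y)"
    and "\<And>y. fst y > 0 \<Longrightarrow> snd y > 0 \<Longrightarrow> f y \<le> g y"
  shows "(\<integral>y. gamma_pair a y * f y \<partial>lborel2) \<le> (\<integral>y. gamma_pair a y * g y \<partial>lborel2)"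
proof (rule integral_mono[OF assms(2,3)])
  fix y
  show "gamma_pair a y * f y \<le> gamma_pair a y * g y"
  proof (cases "gamma_pair a y = 0")
    case False
    then show ?thesis
      using gamma_pair_nonzero_imp_pos assms(4) gamma_pair_nonneg[OF assms(1)] by (simp add: mult_left_mono)
  qed simp
qed

lemma ln_fst_le_log_winner:
  assumes "snd th \<le> fst th" "fst th > 0" "fst y > 0" "snd y > 0"
  shows "ln (fst y) \<le> log_winner th y"
proof (cases "fst th * fst y \<ge> snd th * snd y")
  case False
  moreover have "snd th * snd y \<le> fst th * snd y" using assms by (simp add: mult_right_mono)
  ultimately have "fst th * fst y < fst th * snd y" by linarith
  then have "fst y < snd y" using assms(2) by simp
  with False assms show ?thesis by (simp add: log_winner_def)
qed (simp add: log_winner_def)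

lemma ln_snd_le_log_winner:
  assumes "fst th \<le> snd th" "snd th > 0" "fst y > 0" "snd y > 0"
  shows "ln (snd y) \<le> log_winner th y"
proof (cases "fst th * fst y \<ge> snd th * snd y")
  case True
  moreover have "fst th * fst y \<le> snd th * fst y" using assms by (simp add: mult_right_mono)
  ultimately have "snd th * snd y \<le> snd th * fst y" by linarith
  then have "snd y \<le> fst y" using assms(2) by simp
  with True assms show ?thesis by (simp add: log_winner_def)
qed (simp add: log_winner_def)

lemma log_winner_le_ln_max: "fst y > 0 \<Longrightarrow> snd y > 0 \<Longrightarrow> log_winner th y \<le> ln (max (fst y) (snd y))"
  by (auto simp: log_winner_def max_def)

lemma log_winner_one_one: "log_winner (1, 1) y = ln (max (fst y) (snd y))"
  by (simp add: log_winner_def max_def)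

lemma Digamma_le_mean_log_winner:
  assumes a: "a > 0" and th: "th \<in> Theta"
  shows "Digamma a \<le> mean_log_winner a th"
proof (cases "snd th \<le> fst th")
  case True
  have "Digamma a = (\<integral>y. gamma_pair a y * ln (fst y) \<partial>lborel2)"
    using integral_gamma_pair_mult_fst[OF a integrable_g_std_mult_ln[OF a]] integral_g_std_mult_ln[OF a] by simp
  also have "\<dots> \<le> mean_log_winner a th"
    unfolding mean_log_winner_def
    using True th ln_fst_le_log_winner
    by (intro integral_gamma_pair_mult_mono a integrable_gamma_pair_mult_log_winner
        integrable_gamma_pair_mult_fst integrable_g_std_mult_ln) (auto simp: Theta_def)
  finally show ?thesis .
next
  case False
  have "Digamma a = (\<integral>y. gamma_pair a y * ln (snd y) \<partial>lborel2)"
    using integral_gamma_pair_mult_snd[OF a integrable_g_std_mult_ln[OF a]] integral_g_std_mult_ln[OF a] by simp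
  also have "\<dots> \<le> mean_log_winner a th"
    unfolding mean_log_winner_def
    using False th ln_snd_le_log_winner
    by (intro integral_gamma_pair_mult_mono a integrable_gamma_pair_mult_log_winner
        integrable_gamma_pair_mult_snd integrable_g_std_mult_ln) (auto simp: Theta_def)
  finally show ?thesis .
qed

lemma mean_log_winner_le_one_one:
  "a > 0 \<Longrightarrow> mean_log_winner a th \<le> mean_log_winner a (1, 1)"
  unfolding mean_log_winner_def
  by (intro integral_gamma_pair_mult_mono integrable_gamma_pair_mult_log_winner)
    (simp_all add: log_winner_one_one log_winner_le_ln_max)

lemma mean_log_winner_tendsto_Digamma:
  assumes a: "a > 0"
  shows "(\<lambda>n. mean_log_winner a (real (Suc n), 1)) \<longlonglongrightarrow> Digamma a"
proof -
  have "(\<lambda>n. mean_log_winner a (real (Suc n), 1)) \<longlonglongrightarrow> (\<integral>y. gamma_pair a y * ln (fst y) \<partial>lborel2)"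
    unfolding mean_log_winner_def
  proof (rule integral_dominated_convergence
      [where w = "\<lambda>y. gamma_pair a y * (\<bar>ln (fst y)\<bar> + \<bar>ln (snd y)\<bar>)"])
    show "integrable lborel2 (\<lambda>y. gamma_pair a y * (\<bar>ln (fst y)\<bar> + \<bar>ln (snd y)\<bar>))"
      using a by (rule integrable_gamma_pair_mult_abs_ln)
    show "AE y in lborel2. norm (gamma_pair a y * log_winner (real (Suc n), 1) y)
        \<le> gamma_pair a y * (\<bar>ln (fst y)\<bar> + \<bar>ln (snd y)\<bar>)" for n
      using gamma_pair_nonneg[OF a] by (intro AE_I2) (auto simp: log_winner_def abs_mult intro!: mult_left_mono)
    show "AE y in lborel2. (\<lambda>n. gamma_pair a y * log_winner (real (Suc n), 1) y)
        \<longlonglongrightarrow> gamma_pair a y * ln (fst y)"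
    proof (rule AE_I2)
      fix y :: "real \<times> real"
      show "(\<lambda>n. gamma_pair a y * log_winner (real (Suc n), 1) y) \<longlonglongrightarrow> gamma_pair a y * ln (fst y)"
      proof (cases "fst y > 0")
        case True
        obtain N :: nat where N: "snd y / fst y < real N"
          using reals_Archimedean2 by blast
        have "log_winner (real (Suc n), 1) y = ln (fst y)" if "n \<ge> N" for n
        proof -
          have "snd y / fst y \<le> real (Suc n)" using N that by linarith
          then show ?thesis using True by (simp add: log_winner_def divide_le_eq mult.commute)
        qed
        then show ?thesis
          by (intro tendsto_eventually) (auto simp: eventually_sequentially)
      qed (simp add: gamma_pair_def g_std_def gamma_dens_def)
    qed
  qed simp_all
  then show ?thesis
    using integral_gamma_pair_mult_fst[OF a integrable_g_std_mult_ln[OF a]] integral_g_std_mult_ln[OF a] by simp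
qed

lemma G_std_eq_integral_indicator: "G_std a x = (\<integral>y. indicator {..x} y * g_std a y \<partial>lborel)"
  by (simp add: G_std_def set_lebesgue_integral_def)

lemma G_std_eq_integral_indicator_lessThan:
  "G_std a x = (\<integral>y. indicator {..<x} y * g_std a y \<partial>lborel)"
  unfolding G_std_eq_integral_indicator
  by (rule integral_cong_AE) (use AE_lborel_singleton[of x] in \<open>auto simp: indicator_def elim!: eventually_mono\<close>)

lemma integral_gamma_pair_mult_ln_fst_if_le:
  assumes a: "a > 0"
  shows "(\<integral>y. gamma_pair a y * (if snd y \<le> fst y then ln (fst y) else 0) \<partial>lborel2)
    = (\<integral>x. g_std a x * ln x * G_std a x \<partial>lborel)"
proof -
  define A where "A = (\<lambda>y. gamma_pair a y * (if snd y \<le> fst y then ln (fst y) else 0))"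
  have "integrable lborel2 A"
    unfolding A_def by (rule integrable_mult_dominated[OF integrable_gamma_pair_mult_abs_ln[OF a]]) simp_all
  then have "integral\<^sup>L lborel2 A = (\<integral>x. (\<integral>y. A (x, y) \<partial>lborel) \<partial>lborel)"
    by (rule lborel_pair.integral_fst'[symmetric])
  also have "\<dots> = (\<integral>x. g_std a x * ln x * G_std a x \<partial>lborel)"
  proof (rule Bochner_Integration.integral_cong[OF refl])
    fix x
    have "(\<lambda>y. A (x, y)) = (\<lambda>y. (g_std a x * ln x) * (indicator {..x} y * g_std a y))"
      by (simp add: fun_eq_iff A_def gamma_pair_def indicator_def)
    then show "(\<integral>y. A (x, y) \<partial>lborel) = g_std a x * ln x * G_std a x"
      by (simp add: G_std_eq_integral_indicator)
  qed
  finally show ?thesis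
    unfolding A_def .
qed

lemma integral_gamma_pair_mult_ln_snd_if_less:
  assumes a: "a > 0"
  shows "(\<integral>y. gamma_pair a y * (if fst y < snd y then ln (snd y) else 0) \<partial>lborel2)
    = (\<integral>x. g_std a x * ln x * G_std a x \<partial>lborel)"
proof -
  define B where "B = (\<lambda>y. gamma_pair a y * (if fst y < snd y then ln (snd y) else 0))"
  have "integrable lborel2 B"
    unfolding B_def by (rule integrable_mult_dominated[OF integrable_gamma_pair_mult_abs_ln[OF a]]) simp_all
  then have "integral\<^sup>L lborel2 B = (\<integral>x. (\<integral>y. B (y, x) \<partial>lborel) \<partial>lborel)"
    using lborel_pair.integral_snd[of "\<lambda>y x. B (y, x)"] by simp
  also have "\<dots> = (\<integral>x. g_std a x * ln x * G_std a x \<partial>lborel)"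
  proof (rule Bochner_Integration.integral_cong[OF refl])
    fix x
    have "(\<lambda>y. B (y, x)) = (\<lambda>y. (g_std a x * ln x) * (indicator {..<x} y * g_std a y))"
      by (simp add: fun_eq_iff B_def gamma_pair_def indicator_def)
    then show "(\<integral>y. B (y, x) \<partial>lborel) = g_std a x * ln x * G_std a x"
      by (simp add: G_std_eq_integral_indicator_lessThan)
  qed
  finally show ?thesis
    unfolding B_def .
qed

lemma mean_log_winner_one_one:
  assumes a: "a > 0"
  shows "mean_log_winner a (1, 1) = c2 a"
proof -
  let ?A = "\<lambda>y. gamma_pair a y * (if snd y \<le> fst y then ln (fst y) else 0)"
  let ?B = "\<lambda>y. gamma_pair a y * (if fst y < snd y then ln (snd y) else 0)"
  have "(\<lambda>y. gamma_pair a y * log_winner (1, 1) y) = (\<lambda>y. ?A y + ?B y)"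
    by (auto simp: fun_eq_iff log_winner_def)
  moreover have "integrable lborel2 ?A" "integrable lborel2 ?B"
    by (rule integrable_mult_dominated[OF integrable_gamma_pair_mult_abs_ln[OF a]]; simp)+
  ultimately have "mean_log_winner a (1, 1) = 2 * (\<integral>x. g_std a x * ln x * G_std a x \<partial>lborel)"
    by (simp add: mean_log_winner_def integral_gamma_pair_mult_ln_fst_if_le[OF a]
        integral_gamma_pair_mult_ln_snd_if_less[OF a])
  also have "(\<integral>x. g_std a x * ln x * G_std a x \<partial>lborel) = (\<integral>z\<in>{0<..}. ln z * G_std a z * g_std a z \<partial>lborel)"
    unfolding set_lebesgue_integral_def
    by (rule Bochner_Integration.integral_cong) (auto simp: indicator_def g_std_def gamma_dens_def)
  finally show ?thesis
    by (simp add: c2_def)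
qed

lemma mean_log_winner_bounds:
  "a > 0 \<Longrightarrow> th \<in> Theta \<Longrightarrow> c1 a \<le> mean_log_winner a th \<and> mean_log_winner a th \<le> c2 a"
  using Digamma_le_mean_log_winner mean_log_winner_le_one_one mean_log_winner_one_one
  by (simp add: c1_def)

lemma risk_delta_less_outside:
  assumes "a > 0" "th \<in> Theta" "(d < c \<and> c \<le> c1 a) \<or> (c2 a \<le> c \<and> c < d)"
  shows "risk a th (delta c) < risk a th (delta d)"
  using mean_log_winner_bounds[OF assms(1,2)] assms(3)
  by (auto simp: risk_delta_less_iff[OF assms(1,2)])

lemma delta_measurable: "delta c \<in> borel_measurable borel"
proof -
  have "delta c \<in> borel_measurable lborel2"
    unfolding delta_def by measurable
  then show ?thesis by (simp add: lborel_prod)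
qed

lemma inadmissible_delta:
  assumes a: "a > 0" and c: "c < c1 a \<or> c > c2 a"
  shows "inadmissible a (delta c)"
proof -
  define c' where "c' = (if c < c1 a then c1 a else c2 a)"
  have "risk a th (delta c') < risk a th (delta c)" if "th \<in> Theta" for th
    using mean_log_winner_bounds[OF a that] c
    by (auto simp: risk_delta_less_iff[OF a that] c'_def)
  moreover have "(1, 1) \<in> Theta"
    by (simp add: Theta_def)
  ultimately show ?thesis
    using delta_measurable[of c'] unfolding inadmissible_def dominates_def by (blast intro: less_imp_le)
qed

lemma admissible_within_K1_delta:
  assumes a: "a > 0" and c: "c \<in> {c1 a..c2 a}"
  shows "admissible_within_K1 a c"
  unfolding admissible_within_K1_def
proof
  assume "\<exists>c'. dominates a (delta c') (delta c)"
  then obtain c' where le: "\<And>th. th \<in> Theta \<Longrightarrow> risk a th (delta c') \<le> risk a th (delta c)"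
    and strict: "\<exists>th\<in>Theta. risk a th (delta c') < risk a th (delta c)"
    unfolding dominates_def by blast
  consider "c' < c" | "c' = c" | "c < c'" by linarith
  then show False
  proof cases
    case 1
    have "(1, 1) \<in> Theta" by (simp add: Theta_def)
    then show False
      using le[of "(1, 1)"] c 1 mean_log_winner_one_one[OF a]
      by (simp add: risk_delta_le_iff[OF a])
  next
    case 2
    then show False using strict by simp
  next
    case 3
    have "\<forall>\<^sub>F n in sequentially. mean_log_winner a (real (Suc n), 1) < (c + c') / 2"
      using c 3 by (intro order_tendstoD(2)[OF mean_log_winner_tendsto_Digamma[OF a]]) (simp add: c1_def)
    then obtain n where n: "mean_log_winner a (real (Suc n), 1) < (c + c') / 2"
      using eventually_happens' sequentially_bot by blast
    have "(real (Suc n), 1) \<in> Theta" by (simp add: Theta_def)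
    then show False
      using le[of "(real (Suc n), 1)"] n 3 by (auto simp: risk_delta_le_iff[OF a])
  qed
qed

theorem theorem2p1:
  fixes \<alpha> :: real
  assumes "\<alpha> > 0"
  shows "(\<forall>c\<in>{c1 \<alpha>..c2 \<alpha>}. admissible_within_K1 \<alpha> c)
       \<and> (\<forall>c. (c < c1 \<alpha> \<or> c > c2 \<alpha>) \<longrightarrow> inadmissible \<alpha> (delta c))
       \<and> (\<forall>c d. ((d < c \<and> c \<le> c1 \<alpha>) \<or> (c2 \<alpha> \<le> c \<and> c < d)) \<longrightarrow>
              (\<forall>th\<in>Theta. risk \<alpha> th (delta c) < risk \<alpha> th (delta d)))"
  using admissible_within_K1_delta[OF assms] inadmissible_delta[OF assms] risk_delta_less_outside[OF assms]
  by blast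

end
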